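(* There exists a minimal, weakly mixing homeomorphism $T\colon X\to X$ of a Cantor set $X$ which is conjugate to a homeomorphism $f\colon K\to K$ of a Cantor set $K\subseteq\mathbb{R}$ satisfying $f'(x)=0$ for every $x\in K$.
   Context: A Cantor set is a compact metric space that is totally disconnected and has no isolated points. $(X,T)$ is minimal if $X$ has no nonempty proper closed subset $A$ with $T(A)=A$; transitive if for all nonempty open $U,V\subseteq X$ there is $n\in\mathbb{N}$ with $T^n(U)\cap V\neq\emptyset$; weakly mixing if $(X\times X,T\times T)$ is transitive. Conjugacy means there is a homeomorphism $h\colon X\to K$ with $h\circ T=f\circ h$. For $K\subseteq\mathbb{R}$ perfect, $f'(x)=\lim_{y\to x,\,y\in K\setminus\{x\}}\frac{f(y)-f(x)}{y-x}$. *)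

theory Defs
  imports "HOL-Analysis.Analysis"
begin

definition totally_disconnected :: "'a::topological_space set \<Rightarrow> bool" where
  "totally_disconnected X \<longleftrightarrow>
     (\<forall>C. C \<subseteq> X \<and> connected C \<longrightarrow> (\<forall>a\<in>C. \<forall>b\<in>C. a = b))"

definition cantor_set :: "'a::metric_space set \<Rightarrow> bool" where
  "cantor_set X \<longleftrightarrow> X \<noteq> {} \<and> compact X \<and> totally_disconnected X \<and> (\<forall>x\<in>X. x islimpt X)"

definition homeo_of :: "'a::topological_space set \<Rightarrow> ('a \<Rightarrow> 'a) \<Rightarrow> bool" where
  "homeo_of X T \<longleftrightarrow> (\<exists>S. homeomorphism X X T S)"

definition minimal_sys :: "'a::topological_space set \<Rightarrow> ('a \<Rightarrow> 'a) \<Rightarrow> bool" where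
  "minimal_sys X T \<longleftrightarrow>
     \<not> (\<exists>A. A \<noteq> {} \<and> A \<subset> X \<and> closedin (top_of_set X) A \<and> T ` A = A)"

definition transitive_sys :: "'a::topological_space set \<Rightarrow> ('a \<Rightarrow> 'a) \<Rightarrow> bool" where
  "transitive_sys X T \<longleftrightarrow>
     (\<forall>U V. openin (top_of_set X) U \<and> U \<noteq> {} \<and> openin (top_of_set X) V \<and> V \<noteq> {}
        \<longrightarrow> (\<exists>n::nat. n \<ge> 1 \<and> (T ^^ n) ` U \<inter> V \<noteq> {}))"

definition weakly_mixing :: "'a::topological_space set \<Rightarrow> ('a \<Rightarrow> 'a) \<Rightarrow> bool" where
  "weakly_mixing X T \<longleftrightarrow> transitive_sys (X \<times> X) (\<lambda>(x, y). (T x, T y))"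

definition conjugate ::
  "'a::topological_space set \<Rightarrow> ('a \<Rightarrow> 'a) \<Rightarrow> 'b::topological_space set \<Rightarrow> ('b \<Rightarrow> 'b) \<Rightarrow> bool" where
  "conjugate X T K f \<longleftrightarrow>
     (\<exists>h g. homeomorphism X K h g \<and> (\<forall>x\<in>X. h (T x) = f (h x)))"

text \<open>Derivative relative to a perfect set \<open>K \<subseteq> \<real>\<close>: limit of difference quotients
  as \<open>y \<to> x\<close> with \<open>y \<in> K - {x}\<close> (the filter \<open>at x within K\<close> excludes \<open>x\<close>).\<close>
definition has_rel_deriv :: "(real \<Rightarrow> real) \<Rightarrow> real set \<Rightarrow> real \<Rightarrow> real \<Rightarrow> bool" where
  "has_rel_deriv f K x d \<longleftrightarrow> ((\<lambda>y. (f y - f x) / (y - x)) \<longlongrightarrow> d) (at x within K)"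

end

theory Submission
  imports Defs
begin

text \<open>
  The map is built by cutting and stacking three towers. Tower \<open>a\<close> of level \<open>n + 1\<close> is a stack
  of level-\<open>n\<close> towers following the word \<open>0\<^sup>n\<^sup>+\<^sup>2 1\<^sup>n\<^sup>+\<^sup>1 2\<close> (for \<open>a = 0, 2\<close>) or
  \<open>0\<^sup>n\<^sup>+\<^sup>1 1\<^sup>n\<^sup>+\<^sup>2 2\<close> (for \<open>a = 1\<close>), and tower \<open>1\<close> is always one floor higher than the others.
  Realising each floor as a closed interval inside the interval of the floor containing it gives
  a Cantor set \<open>K \<subseteq> \<real>\<close>, on which the map moves every point one floor up.

  Interval lengths are chosen to shrink super-exponentially along the order in which the map
  visits floors: two points separating at level \<open>n + 1\<close> are at least a sibling gap apart, while
  their images share a level-\<open>n\<close> interval shorter than that gap by a factor \<open>n + 2\<close>. Hence the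
  difference quotients tend to \<open>0\<close>. Every orbit runs through every floor, which gives minimality;
  since the heights of towers \<open>0\<close> and \<open>1\<close> differ by one, the return times between two pairs of
  floors can be matched simultaneously, which gives weak mixing. The conjugacy is the identity.
\<close>

section \<open>Concatenated blocks\<close>

definition block_start :: "('a \<Rightarrow> nat) \<Rightarrow> 'a list \<Rightarrow> nat \<Rightarrow> nat" where
  "block_start h ws k = sum_list (map h (take k ws))"

fun locate :: "(nat \<Rightarrow> nat) \<Rightarrow> nat list \<Rightarrow> nat \<Rightarrow> nat \<times> nat" where
  "locate h [] j = (0, j)"
| "locate h (c # cs) j = (if j < h c then (c, j) else locate h cs (j - h c))"

lemma locate_block_start:
  assumes "k < length ws" "i < h (ws ! k)"
  shows "locate h ws (block_start h ws k + i) = (ws ! k, i)"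
  using assms
proof (induction ws arbitrary: k)
  case Nil
  then show ?case by simp
next
  case (Cons c cs)
  show ?case
  proof (cases k)
    case 0
    then show ?thesis using Cons by (simp add: block_start_def)
  next
    case (Suc k')
    have "block_start h (c # cs) k + i = h c + (block_start h cs k' + i)"
      using Suc by (simp add: block_start_def)
    then show ?thesis using Cons Suc by simp
  qed
qed

lemma position_in_block:
  assumes "j < sum_list (map h ws)"
  shows "\<exists>k i. k < length ws \<and> i < h (ws ! k) \<and> j = block_start h ws k + i"
  using assms
proof (induction ws arbitrary: j)
  case Nil
  then show ?case by simp
next
  case (Cons c cs)
  show ?case
  proof (cases "j < h c")
    case True
    then show ?thesis by (intro exI[of _ 0] exI[of _ j]) (simp add: block_start_def)
  next
    case False
    then have "j - h c < sum_list (map h cs)" using Cons.prems by simp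
    then obtain k i where "k < length cs" "i < h (cs ! k)" "j - h c = block_start h cs k + i"
      using Cons.IH by blast
    then show ?thesis using False
      by (intro exI[of _ "Suc k"] exI[of _ i]) (auto simp: block_start_def)
  qed
qed

lemma block_start_Suc:
  "k < length ws \<Longrightarrow> block_start h ws (Suc k) = block_start h ws k + h (ws ! k)"
  by (simp add: block_start_def take_Suc_conv_app_nth)

lemma block_start_add_le_sum:
  assumes "k < length ws"
  shows "block_start h ws k + h (ws ! k) \<le> sum_list (map h ws)"
proof -
  have "sum_list (map h ws) = block_start h ws (Suc k) + sum_list (map h (drop (Suc k) ws))"
    unfolding block_start_def by (metis append_take_drop_id map_append sum_list_append)
  then show ?thesis using block_start_Suc[OF assms, of h] by simp
qed

lemma block_start_mono: "k \<le> l \<Longrightarrow> block_start h ws k \<le> block_start h ws l"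
  unfolding block_start_def by (metis le_add_diff_inverse take_add map_append sum_list_append le_add1)

lemma block_start_length: "block_start h ws (length ws) = sum_list (map h ws)"
  by (simp add: block_start_def)

section \<open>Towers\<close>

definition word :: "nat \<Rightarrow> nat \<Rightarrow> nat list" where
  "word n a = (if a = 1 then replicate (n+1) 0 @ replicate (n+2) 1 @ [2]
               else replicate (n+2) 0 @ replicate (n+1) 1 @ [2])"

fun height :: "nat \<Rightarrow> nat \<Rightarrow> nat" where
  "height 0 a = (if a = 1 then 2 else 1)"
| "height (Suc n) a = sum_list (map (height n) (word n a))"

declare height.simps(2)[simp del]

lemma word_length: "length (word n a) = 2*n + 4"
  by (simp add: word_def)

lemma word_nth_lt_3: "k < length (word n a) \<Longrightarrow> word n a ! k < 3"
proof -
  assume "k < length (word n a)"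
  then have "word n a ! k \<in> set (word n a)" by (rule nth_mem)
  moreover have "set (word n a) \<subseteq> {0, 1, 2}" by (auto simp: word_def)
  ultimately show ?thesis by auto
qed

lemma word_nth_0: "word n a ! 0 = 0"
  by (simp add: word_def)

lemma word_nth_last: "word n a ! (2*n+3) = 2"
  by (simp add: word_def nth_append)

lemma word_nth_ne_2:
  assumes "k < 2*n+3"
  shows "word n a ! k \<noteq> 2"
proof -
  define xs :: "nat list" where "xs = (if a = 1 then replicate (n+1) 0 @ replicate (n+2) 1
                                      else replicate (n+2) 0 @ replicate (n+1) 1)"
  have "word n a = xs @ [2]" "length xs = 2*n+3" by (simp_all add: word_def xs_def)
  then have "word n a ! k = xs ! k" using assms by (simp add: nth_append)
  moreover have "xs ! k \<in> set xs" using assms by (simp add: xs_def)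
  ultimately show ?thesis by (auto simp: xs_def split: if_splits)
qed

lemma word_2: "word n 2 = word n 0"
  by (simp add: word_def)

lemma height_pos: "0 < height n a"
proof (induction n arbitrary: a)
  case 0
  then show ?case by simp
next
  case (Suc n)
  obtain c cs where "word n a = c # cs" using word_length[of n a] by (cases "word n a") auto
  then show ?case using Suc.IH[of c] by (simp add: height.simps(2))
qed

lemma height_2: "height n 2 = height n 0"
  by (cases n) (simp_all add: height.simps(2) word_2)

lemma height_1: "height n 1 = height n 0 + 1"
proof (induction n)
  case 0
  then show ?case by simp
next
  case (Suc n)
  then show ?case
    by (simp add: height.simps(2) word_def sum_list_replicate height_2 algebra_simps)
qed

lemma height_0_le: "a < 3 \<Longrightarrow> height n 0 \<le> height n a"
  using height_1 height_2 by (cases "a = 0 \<or> a = 1 \<or> a = 2") auto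

lemma height_le_height_0_plus_1: "a < 3 \<Longrightarrow> height n a \<le> height n 0 + 1"
  using height_1 height_2 by (cases "a = 0 \<or> a = 1 \<or> a = 2") auto

lemma height_0_mono: "m \<le> n \<Longrightarrow> height m 0 \<le> height n 0"
proof (induction n)
  case 0
  then show ?case by simp
next
  case (Suc n)
  have "height n 0 \<le> height (Suc n) 0"
    using height_1[of n] by (simp add: height.simps(2) word_def sum_list_replicate height_2)
  then show ?case using Suc by (cases "m = Suc n") auto
qed

text \<open>A cell \<open>(a, j)\<close> of level \<open>n\<close> is floor \<open>j\<close> of tower \<open>a\<close>; \<open>parent\<close> sends a floor of
  level \<open>n + 1\<close> to the level-\<open>n\<close> cell containing it.\<close>

definition is_cell :: "nat \<Rightarrow> nat \<times> nat \<Rightarrow> bool" where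
  "is_cell n p \<longleftrightarrow> fst p < 3 \<and> snd p < height n (fst p)"

definition is_top :: "nat \<Rightarrow> nat \<times> nat \<Rightarrow> bool" where
  "is_top n p \<longleftrightarrow> Suc (snd p) = height n (fst p)"

definition next_floor :: "nat \<times> nat \<Rightarrow> nat \<times> nat" where
  "next_floor p = (fst p, Suc (snd p))"

definition parent :: "nat \<Rightarrow> nat \<times> nat \<Rightarrow> nat \<times> nat" where
  "parent n p = locate (height n) (word n (fst p)) (snd p)"

abbreviation block_pos :: "nat \<Rightarrow> nat \<Rightarrow> nat \<Rightarrow> nat" where
  "block_pos n a k \<equiv> block_start (height n) (word n a) k"

lemma is_cell_next_floor: "is_cell n p \<Longrightarrow> \<not> is_top n p \<Longrightarrow> is_cell n (next_floor p)"
  by (auto simp: is_cell_def is_top_def next_floor_def)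

lemma parent_decompose:
  assumes "j < height (Suc n) a"
  obtains k i where "k < 2*n+4" "i < height n (word n a ! k)" "j = block_pos n a k + i"
    "parent n (a, j) = (word n a ! k, i)"
proof -
  obtain k i where "k < length (word n a)" "i < height n (word n a ! k)" "j = block_pos n a k + i"
    using position_in_block[of j "height n" "word n a"] assms by (auto simp: height.simps(2))
  then show ?thesis
    using that locate_block_start[of k "word n a" i "height n"] by (auto simp: parent_def word_length)
qed

lemma parent_block_pos:
  "k < 2*n+4 \<Longrightarrow> i < height n (word n a ! k) \<Longrightarrow> parent n (a, block_pos n a k + i) = (word n a ! k, i)"
  using locate_block_start[of k "word n a" i "height n"] by (simp add: parent_def word_length)

lemma block_pos_add_le:
  "k < 2*n+4 \<Longrightarrow> block_pos n a k + height n (word n a ! k) \<le> height (Suc n) a"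
  using block_start_add_le_sum[of k "word n a" "height n"] by (simp add: word_length height.simps(2))

lemma block_pos_Suc:
  "k < 2*n+4 \<Longrightarrow> block_pos n a (Suc k) = block_pos n a k + height n (word n a ! k)"
  using block_start_Suc[of k "word n a" "height n"] by (simp add: word_length)

lemma block_pos_end: "block_pos n a (Suc (2*n+3)) = height (Suc n) a"
  using block_start_length[of "height n" "word n a"] word_length[of n a]
  by (simp add: height.simps(2) add.commute)

lemma is_cell_parent:
  assumes "is_cell (Suc n) p"
  shows "is_cell n (parent n p)"
proof -
  obtain a j where p: "p = (a, j)" by (cases p)
  obtain k i where "k < 2*n+4" "i < height n (word n a ! k)" "parent n (a, j) = (word n a ! k, i)"
    using assms p by (auto simp: is_cell_def elim: parent_decompose)
  then show ?thesis using p word_nth_lt_3[of k n a] by (simp add: is_cell_def word_length)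
qed

lemma parent_low: "j < height n 0 \<Longrightarrow> parent n (a, j) = (0, j)"
  using parent_block_pos[of 0 n j a] by (simp add: word_nth_0 block_start_def)

lemma parent_base: "parent n (a, 0) = (0, 0)"
  using parent_low[of 0 n a] height_pos[of n 0] by simp

lemma parent_next_floor:
  assumes "is_cell (Suc n) p" "\<not> is_top n (parent n p)"
  shows "parent n (next_floor p) = next_floor (parent n p)"
proof -
  obtain a j where p: "p = (a, j)" by (cases p)
  obtain k i where k: "k < 2*n+4" "i < height n (word n a ! k)" "j = block_pos n a k + i"
     "parent n (a, j) = (word n a ! k, i)"
    using assms(1) p by (auto simp: is_cell_def elim: parent_decompose)
  then have "Suc i < height n (word n a ! k)" using assms p by (auto simp: is_top_def)
  then show ?thesis using k p parent_block_pos[OF k(1), of "Suc i"] by (simp add: next_floor_def)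
qed

lemma parent_next_floor_of_top:
  assumes "is_cell (Suc n) p" "is_top n (parent n p)" "\<not> is_top (Suc n) p"
  shows "snd (parent n (next_floor p)) = 0"
proof -
  obtain a j where p: "p = (a, j)" by (cases p)
  obtain k i where k: "k < 2*n+4" "i < height n (word n a ! k)" "j = block_pos n a k + i"
     "parent n (a, j) = (word n a ! k, i)"
    using assms(1) p by (auto simp: is_cell_def elim: parent_decompose)
  have i: "Suc i = height n (word n a ! k)" using assms p k(4) by (auto simp: is_top_def)
  have "Suc j < height (Suc n) a" using assms p by (auto simp: is_top_def is_cell_def)
  have "k \<noteq> 2*n+3"
  proof
    assume "k = 2*n+3"
    then have "block_pos n a (Suc k) = height (Suc n) a" using block_pos_end[of n a] by simp
    then show False using \<open>Suc j < height (Suc n) a\<close> block_pos_Suc[OF k(1)] k(3) i by simp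
  qed
  then have "Suc k < 2*n+4" using k(1) by simp
  then have "parent n (a, block_pos n a (Suc k) + 0) = (word n a ! Suc k, 0)"
    using parent_block_pos[of "Suc k" n 0 a] height_pos by simp
  moreover have "next_floor p = (a, block_pos n a (Suc k) + 0)"
    using block_pos_Suc[OF k(1)] k(3) i p by (simp add: next_floor_def)
  ultimately show ?thesis by simp
qed

lemma parent_of_top:
  assumes "is_cell (Suc n) p" "is_top (Suc n) p"
  shows "parent n p = (2, height n 2 - 1)"
proof -
  obtain a j where p: "p = (a, j)" by (cases p)
  obtain k i where k: "k < 2*n+4" "i < height n (word n a ! k)" "j = block_pos n a k + i"
     "parent n (a, j) = (word n a ! k, i)"
    using assms(1) p by (auto simp: is_cell_def elim: parent_decompose)
  have j: "Suc j = height (Suc n) a" using assms p by (auto simp: is_top_def)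
  have kk: "k = 2*n+3"
  proof (rule ccontr)
    assume "k \<noteq> 2*n+3"
    then have "block_pos n a (Suc k) + height n (word n a ! Suc k) \<le> height (Suc n) a"
      using k(1) block_pos_add_le[of "Suc k"] by simp
    then show False using block_pos_Suc[OF k(1)] k(2,3) j height_pos[of n "word n a ! Suc k"] by simp
  qed
  then have "block_pos n a (Suc k) = height (Suc n) a" using block_pos_end[of n a] by simp
  then have "Suc i = height n (word n a ! k)" using block_pos_Suc[OF k(1)] k(3) j by simp
  then show ?thesis using k kk p word_nth_last by simp
qed

lemma is_top_of_parent_top:
  assumes "is_cell (Suc n) p" "parent n p = (2, height n 2 - 1)"
  shows "is_top (Suc n) p"
proof -
  obtain a j where p: "p = (a, j)" by (cases p)
  obtain k i where k: "k < 2*n+4" "i < height n (word n a ! k)" "j = block_pos n a k + i"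
     "parent n (a, j) = (word n a ! k, i)"
    using assms(1) p by (auto simp: is_cell_def elim: parent_decompose)
  have w: "word n a ! k = 2" and i: "i = height n 2 - 1" using k assms p by simp_all
  then have "k = 2*n+3" using word_nth_ne_2[of k n a] k(1) by (cases "k < 2*n+3") auto
  then have "block_pos n a (Suc k) = height (Suc n) a" using block_pos_end[of n a] by simp
  then have "Suc j = height (Suc n) a"
    using block_pos_Suc[OF k(1)] k(3) w i height_pos[of n 2] by simp
  then show ?thesis using p by (simp add: is_top_def)
qed

text \<open>Towers \<open>0\<close> and \<open>2\<close> share their word, and each letter \<open>0, 1, 2\<close> occurs in it
  after the first block; so every cell has a common child in these two towers.\<close>

lemma common_child_exists:
  assumes "is_cell n q"
  shows "\<exists>p. 1 \<le> p \<and> p < height (Suc n) 0 \<and> parent n (0, p) = q \<and> parent n (2, p) = q"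
proof -
  obtain t i where q: "q = (t, i)" by (cases q)
  define k where "k = (if t = 0 then 1 else if t = 1 then n+2 else 2*n+3)"
  have k: "k < 2*n+4" "1 \<le> k" by (auto simp: k_def)
  have "t = 0 \<or> t = 1 \<or> t = 2" using assms q by (auto simp: is_cell_def)
  then have wk: "word n 0 ! k = t" using word_nth_last[of n 0] by (auto simp: k_def word_def nth_append)
  have i: "i < height n t" using assms q by (simp add: is_cell_def)
  have "block_pos n 0 1 \<le> block_pos n 0 k" using block_start_mono k(2) by blast
  moreover have "block_pos n 0 1 = height n 0" by (simp add: block_start_def word_def)
  ultimately have "1 \<le> block_pos n 0 k + i" using height_pos[of n 0] by simp
  moreover have "block_pos n 0 k + i < height (Suc n) 0"
    using block_pos_add_le[OF k(1), of 0] i unfolding wk by linarith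
  moreover have "parent n (0, block_pos n 0 k + i) = q"
    using parent_block_pos[OF k(1), of i 0] wk i q by simp
  moreover have "parent n (2, block_pos n 0 k + i) = q"
    using parent_block_pos[OF k(1), of i 2] wk i q by (simp add: word_2)
  ultimately show ?thesis by blast
qed

section \<open>Nested intervals\<close>

text \<open>The interval of a level-\<open>(n+1)\<close> cell sits at position \<open>slot (n+1) p\<close> among \<open>slots (n+1)\<close>
  equally spaced positions in the interval of its parent, and is at most half a spacing long.
  Interval lengths depend only on the \<open>cell_rank\<close>, which numbers the cells of all levels
  consecutively, each level listing tower \<open>2\<close>, then \<open>0\<close>, then \<open>1\<close>: both moving up one floor and
  passing from the top of tower \<open>2\<close> to the base of tower \<open>0\<close> raise the rank by one, and each
  such step shrinks the length by a factor at least \<open>r + 2\<close>.\<close>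

definition slots :: "nat \<Rightarrow> nat" where
  "slots n = 3 * (height n 0 + 2)"

definition slot :: "nat \<Rightarrow> nat \<times> nat \<Rightarrow> nat" where
  "slot n p = fst p * (height n 0 + 2) + snd p"

fun cells_below :: "nat \<Rightarrow> nat" where
  "cells_below 0 = 0"
| "cells_below (Suc n) = cells_below n + height n 0 + height n 1 + height n 2"

definition tower_offset :: "nat \<Rightarrow> nat \<Rightarrow> nat" where
  "tower_offset n a = (if a = 2 then 0 else if a = 0 then height n 2 else height n 2 + height n 0)"

definition cell_rank :: "nat \<Rightarrow> nat \<times> nat \<Rightarrow> nat" where
  "cell_rank n p = cells_below n + tower_offset n (fst p) + snd p"

fun rank_length :: "nat \<Rightarrow> real" where
  "rank_length 0 = 1"
| "rank_length (Suc r) = rank_length r / (2 * (real r + 2) * real (slots (Suc r)))"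

declare rank_length.simps(2)[simp del]

definition cell_length :: "nat \<Rightarrow> nat \<times> nat \<Rightarrow> real" where
  "cell_length n p = rank_length (cell_rank n p)"

fun cell_left :: "nat \<Rightarrow> nat \<times> nat \<Rightarrow> real" where
  "cell_left 0 p = 2 * real (slot 0 p)"
| "cell_left (Suc n) p = cell_left n (parent n p)
     + cell_length n (parent n p) * real (slot (Suc n) p) / real (slots (Suc n))"

definition cell_ivl :: "nat \<Rightarrow> nat \<times> nat \<Rightarrow> real set" where
  "cell_ivl n p = {cell_left n p .. cell_left n p + cell_length n p}"

lemma slots_ge_1: "1 \<le> real (slots n)"
  by (simp add: slots_def)

lemma slots_mono: "m \<le> n \<Longrightarrow> slots m \<le> slots n"
  using height_0_mono by (simp add: slots_def)

lemma slot_lt_slots: "is_cell n p \<Longrightarrow> slot n p < slots n"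
proof -
  assume "is_cell n p"
  then have "fst p \<le> 2" "snd p < height n 0 + 2"
    using height_le_height_0_plus_1[of "fst p" n] by (auto simp: is_cell_def)
  moreover have "fst p * (height n 0 + 2) \<le> 2 * (height n 0 + 2)"
    using \<open>fst p \<le> 2\<close> by (rule mult_le_mono1)
  ultimately show ?thesis by (simp add: slot_def slots_def)
qed

lemma slot_inj:
  assumes "is_cell n p" "is_cell n q" "slot n p = slot n q"
  shows "p = q"
proof -
  define M where "M = height n 0 + 2"
  have M: "snd p < M" "snd q < M"
    using assms height_le_height_0_plus_1[of "fst p" n] height_le_height_0_plus_1[of "fst q" n]
    by (auto simp: is_cell_def M_def)
  have e: "fst p * M + snd p = fst q * M + snd q" using assms(3) by (simp add: slot_def M_def)
  have "fst p = (fst p * M + snd p) div M" using M by simp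
  also have "\<dots> = (fst q * M + snd q) div M" by (simp only: e)
  also have "\<dots> = fst q" using M by simp
  finally show ?thesis using e by (simp add: prod_eq_iff)
qed

lemma cells_below_ge: "n \<le> cells_below n"
proof (induction n)
  case 0
  then show ?case by simp
next
  case (Suc n)
  then show ?case using height_pos[of n 0] by simp
qed

lemma cell_rank_bounds:
  assumes "is_cell n p"
  shows "cells_below n \<le> cell_rank n p" "cell_rank n p < cells_below (Suc n)"
proof -
  show "cells_below n \<le> cell_rank n p" by (simp add: cell_rank_def)
  have "fst p = 0 \<or> fst p = 1 \<or> fst p = 2" using assms by (auto simp: is_cell_def)
  then show "cell_rank n p < cells_below (Suc n)"
    using assms by (auto simp: cell_rank_def tower_offset_def is_cell_def)
qed

lemma cell_rank_ge_level: "is_cell n p \<Longrightarrow> n \<le> cell_rank n p"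
  using cell_rank_bounds(1) cells_below_ge le_trans by blast

lemma cell_rank_next_floor: "cell_rank n (next_floor p) = Suc (cell_rank n p)"
  by (simp add: cell_rank_def next_floor_def)

lemma rank_length_pos: "0 < rank_length r"
  by (induction r) (simp_all add: rank_length.simps(2) slots_def)

lemma rank_length_Suc_le_half: "rank_length (Suc r) \<le> rank_length r / 2"
proof -
  define D where "D = 2 * (real r + 2) * real (slots (Suc r))"
  have "1 * 1 \<le> (real r + 2) * real (slots (Suc r))"
    using slots_ge_1[of "Suc r"] by (intro mult_mono) auto
  then have "2 \<le> D" unfolding D_def by linarith
  then have "rank_length r / D \<le> rank_length r / 2"
    using rank_length_pos[of r] by (intro divide_left_mono) auto
  then show ?thesis by (simp add: rank_length.simps(2) D_def)
qed

lemma rank_length_antimono: "r \<le> s \<Longrightarrow> rank_length s \<le> rank_length r"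
proof (induction s)
  case 0
  then show ?case by simp
next
  case (Suc s)
  then show ?case
    using rank_length_Suc_le_half[of s] rank_length_pos[of s] by (cases "r = Suc s") auto
qed

lemma rank_length_le_half_pow: "rank_length r \<le> (1/2) ^ r"
proof (induction r)
  case 0
  then show ?case by simp
next
  case (Suc r)
  then show ?case using rank_length_Suc_le_half[of r] by simp
qed

lemma rank_length_step:
  assumes "n \<le> r" "r < s"
  shows "rank_length s \<le> rank_length r / (2 * (real n + 2) * real (slots (Suc n)))"
proof -
  have "rank_length s \<le> rank_length (Suc r)" using rank_length_antimono assms(2) by simp
  also have "\<dots> = rank_length r / (2 * (real r + 2) * real (slots (Suc r)))"
    by (simp add: rank_length.simps(2))
  also have "\<dots> \<le> rank_length r / (2 * (real n + 2) * real (slots (Suc n)))"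
  proof (rule divide_left_mono)
    have "real (slots (Suc n)) \<le> real (slots (Suc r))" using slots_mono[of "Suc n" "Suc r"] assms by simp
    then show "2 * (real n + 2) * real (slots (Suc n)) \<le> 2 * (real r + 2) * real (slots (Suc r))"
      using assms by (simp add: mult_mono)
    show "0 \<le> rank_length r" using rank_length_pos[of r] by simp
    show "0 < 2 * (real r + 2) * real (slots (Suc r)) * (2 * (real n + 2) * real (slots (Suc n)))"
      using slots_ge_1[of "Suc r"] slots_ge_1[of "Suc n"] by simp
  qed
  finally show ?thesis .
qed

lemma cell_length_pos: "0 < cell_length n p"
  by (simp add: cell_length_def rank_length_pos)

lemma cell_length_le: "is_cell n p \<Longrightarrow> cell_length n p \<le> (1/2) ^ n"
  unfolding cell_length_def
  by (meson order.trans rank_length_antimono cell_rank_ge_level rank_length_le_half_pow)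

lemma cell_left_mem: "cell_left n p \<in> cell_ivl n p"
  using cell_length_pos[of n p] by (simp add: cell_ivl_def)

lemma cell_length_child_le:
  assumes "is_cell (Suc n) p"
  shows "cell_length (Suc n) p \<le> cell_length n (parent n p) / (2 * real (slots (Suc n)))"
proof -
  have v: "is_cell n (parent n p)" using is_cell_parent assms by blast
  have "cell_rank n (parent n p) < cell_rank (Suc n) p"
    using cell_rank_bounds(2)[OF v] cell_rank_bounds(1)[OF assms] by linarith
  then have "cell_length (Suc n) p \<le> cell_length n (parent n p) / (2 * (real n + 2) * real (slots (Suc n)))"
    using rank_length_step[OF cell_rank_ge_level[OF v]] by (simp add: cell_length_def)
  also have "\<dots> \<le> cell_length n (parent n p) / (2 * real (slots (Suc n)))"
    using slots_ge_1[of "Suc n"] cell_length_pos[of n "parent n p"]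
    by (intro divide_left_mono) (auto intro: mult_right_mono)
  finally show ?thesis .
qed

lemma cell_ivl_child_subset:
  assumes "is_cell (Suc n) p"
  shows "cell_ivl (Suc n) p \<subseteq> cell_ivl n (parent n p)"
proof -
  define L where "L = cell_length n (parent n p)"
  define Q where "Q = real (slots (Suc n))"
  define c where "c = real (slot (Suc n) p)"
  have Q: "1 \<le> Q" using slots_ge_1 by (simp add: Q_def)
  have cQ: "c + 1 \<le> Q" using slot_lt_slots[OF assms] by (simp add: c_def Q_def)
  have L: "0 < L" by (simp add: L_def cell_length_pos)
  have "L * c / Q + L / (2 * Q) = L * (c + 1/2) / Q"
    using Q by (simp add: field_simps)
  also have "\<dots> \<le> L * Q / Q"
    using L Q cQ by (intro divide_right_mono mult_left_mono) auto
  finally have "L * c / Q + L / (2 * Q) \<le> L" using Q by simp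
  moreover have "0 \<le> L * c / Q" using L Q by (simp add: c_def)
  ultimately show ?thesis
    using cell_length_child_le[OF assms] unfolding cell_ivl_def L_def Q_def c_def by auto
qed

lemma sibling_cells_gap:
  assumes "is_cell (Suc n) p" "is_cell (Suc n) q" "p \<noteq> q" "parent n p = parent n q"
    and "u \<in> cell_ivl (Suc n) p" "v \<in> cell_ivl (Suc n) q"
  shows "cell_length n (parent n p) / (2 * real (slots (Suc n))) \<le> \<bar>u - v\<bar>"
proof -
  define L where "L = cell_length n (parent n p)"
  define Q where "Q = real (slots (Suc n))"
  define x y where "x = real (slot (Suc n) p)" and "y = real (slot (Suc n) q)"
  have Q: "1 \<le> Q" using slots_ge_1 by (simp add: Q_def)
  have L: "0 < L" by (simp add: L_def cell_length_pos)
  have "slot (Suc n) p \<noteq> slot (Suc n) q" using slot_inj assms(1-3) by blast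
  then have "1 \<le> \<bar>x - y\<bar>" unfolding x_def y_def by linarith
  then have "L * 1 \<le> L * \<bar>x - y\<bar>" using L by (intro mult_left_mono) auto
  then have "L / Q \<le> L * \<bar>x - y\<bar> / Q" using Q by (simp add: divide_right_mono)
  also have "\<dots> = \<bar>cell_left (Suc n) p - cell_left (Suc n) q\<bar>"
  proof -
    have "cell_left (Suc n) p - cell_left (Suc n) q = L * (x - y) / Q"
      using assms(4) by (simp add: L_def Q_def x_def y_def diff_divide_distrib right_diff_distrib)
    then show ?thesis using L Q by (simp add: abs_mult)
  qed
  finally have far: "L / Q \<le> \<bar>cell_left (Suc n) p - cell_left (Suc n) q\<bar>" .
  have "cell_length (Suc n) p \<le> L / (2 * Q)" "cell_length (Suc n) q \<le> L / (2 * Q)"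
    using cell_length_child_le[OF assms(1)] cell_length_child_le[OF assms(2)] assms(4)
    by (simp_all add: L_def Q_def)
  then have "cell_left (Suc n) p \<le> u" "u \<le> cell_left (Suc n) p + L / (2 * Q)"
    "cell_left (Suc n) q \<le> v" "v \<le> cell_left (Suc n) q + L / (2 * Q)"
    using assms(5,6) by (auto simp: cell_ivl_def)
  moreover have "L / Q = L / (2 * Q) + L / (2 * Q)" by (simp add: field_simps)
  ultimately have "L / (2 * Q) \<le> \<bar>u - v\<bar>" using far by linarith
  then show ?thesis by (simp add: L_def Q_def)
qed

definition cell_gap :: "nat \<Rightarrow> real" where
  "cell_gap n = rank_length (cells_below n) / (2 * real (slots n))"

lemma cell_gap_pos: "0 < cell_gap n"
  using rank_length_pos slots_ge_1[of n] by (simp add: cell_gap_def)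

lemma cell_gap_Suc_le: "cell_gap (Suc n) \<le> cell_gap n"
  unfolding cell_gap_def
proof (rule frac_le)
  show "rank_length (cells_below (Suc n)) \<le> rank_length (cells_below n)"
    by (simp add: rank_length_antimono)
  show "0 < 2 * real (slots n)" using slots_ge_1[of n] by simp
  show "2 * real (slots n) \<le> 2 * real (slots (Suc n))" using slots_mono[of n "Suc n"] by simp
qed (simp add: rank_length_pos less_imp_le)

lemma cells_gap:
  assumes "is_cell n p" "is_cell n q" "p \<noteq> q" "u \<in> cell_ivl n p" "v \<in> cell_ivl n q"
  shows "cell_gap n \<le> \<bar>u - v\<bar>"
  using assms
proof (induction n arbitrary: p q u v)
  case 0
  have "2 \<le> \<bar>cell_left 0 p - cell_left 0 q\<bar>" using slot_inj 0 by fastforce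
  moreover have "cell_length 0 p \<le> 1" "cell_length 0 q \<le> 1"
    using cell_length_le[OF "0.prems"(1)] cell_length_le[OF "0.prems"(2)] by auto
  moreover have "cell_gap 0 \<le> 1"
    using rank_length_le_half_pow[of 0] slots_ge_1[of 0] by (simp add: cell_gap_def)
  ultimately show ?case using "0.prems"(4,5) by (auto simp: cell_ivl_def)
next
  case (Suc n)
  show ?case
  proof (cases "parent n p = parent n q")
    case True
    have "cell_rank n (parent n p) \<le> cells_below (Suc n)"
      using cell_rank_bounds(2)[OF is_cell_parent[OF Suc.prems(1)]] by simp
    then have "cell_gap (Suc n) \<le> cell_length n (parent n p) / (2 * real (slots (Suc n)))"
      using slots_ge_1[of "Suc n"]
      by (simp add: cell_gap_def cell_length_def divide_right_mono rank_length_antimono)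
    also have "\<dots> \<le> \<bar>u - v\<bar>" using sibling_cells_gap[OF Suc.prems(1,2,3) True Suc.prems(4,5)] .
    finally show ?thesis .
  next
    case False
    have "cell_gap n \<le> \<bar>u - v\<bar>"
      using Suc.IH[OF is_cell_parent[OF Suc.prems(1)] is_cell_parent[OF Suc.prems(2)] False]
        cell_ivl_child_subset[OF Suc.prems(1)] cell_ivl_child_subset[OF Suc.prems(2)] Suc.prems(4,5)
      by blast
    then show ?thesis using cell_gap_Suc_le[of n] by linarith
  qed
qed

lemma cell_ivl_disjoint:
  "is_cell n p \<Longrightarrow> is_cell n q \<Longrightarrow> p \<noteq> q \<Longrightarrow> cell_ivl n p \<inter> cell_ivl n q = {}"
proof (intro equals0I)
  fix x
  assume "is_cell n p" "is_cell n q" "p \<noteq> q" "x \<in> cell_ivl n p \<inter> cell_ivl n q"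
  then have "cell_gap n \<le> \<bar>x - x\<bar>" using cells_gap by blast
  then show False using cell_gap_pos[of n] by simp
qed

section \<open>The Cantor set\<close>

definition Kset :: "real set" where
  "Kset = {z. \<forall>n. \<exists>p. is_cell n p \<and> z \<in> cell_ivl n p}"

definition cell_of :: "nat \<Rightarrow> real \<Rightarrow> nat \<times> nat" where
  "cell_of n z = (THE p. is_cell n p \<and> z \<in> cell_ivl n p)"

lemma cell_of_eq: "is_cell n p \<Longrightarrow> z \<in> cell_ivl n p \<Longrightarrow> cell_of n z = p"
  unfolding cell_of_def using cell_ivl_disjoint by (intro the_equality) blast+

lemma cell_of:
  assumes "z \<in> Kset"
  shows "is_cell n (cell_of n z)" "z \<in> cell_ivl n (cell_of n z)"
proof -
  obtain p where "is_cell n p" "z \<in> cell_ivl n p" using assms unfolding Kset_def by blast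
  then show "is_cell n (cell_of n z)" "z \<in> cell_ivl n (cell_of n z)" using cell_of_eq by auto
qed

lemma parent_cell_of: "z \<in> Kset \<Longrightarrow> parent n (cell_of (Suc n) z) = cell_of n z"
  using cell_ivl_child_subset[OF cell_of(1)] cell_of(2) is_cell_parent[OF cell_of(1)]
  by (metis cell_of_eq subsetD)

lemma cell_of_dist:
  "z \<in> Kset \<Longrightarrow> w \<in> Kset \<Longrightarrow> cell_of n z = cell_of n w \<Longrightarrow> \<bar>z - w\<bar> \<le> cell_length n (cell_of n z)"
  using cell_of[of z n] cell_of[of w n] by (auto simp: cell_ivl_def)

lemma cell_of_dist_le_half_pow:
  assumes "z \<in> Kset" "w \<in> Kset" "cell_of n z = cell_of n w"
  shows "\<bar>z - w\<bar> \<le> (1/2) ^ n"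
  using cell_of_dist[OF assms] cell_length_le[OF cell_of(1)[OF assms(1), of n]] by linarith

lemma Kset_eqI:
  assumes "z \<in> Kset" "w \<in> Kset" "\<And>n. cell_of n z = cell_of n w"
  shows "z = w"
proof (rule ccontr)
  assume "z \<noteq> w"
  then obtain n where "(1/2::real) ^ n < \<bar>z - w\<bar>"
    using real_arch_pow_inv[of "\<bar>z - w\<bar>" "1/2"] by auto
  then show False using cell_of_dist_le_half_pow[OF assms(1,2) assms(3)[of n]] by simp
qed

lemma finite_cells: "finite {p. is_cell n p}"
proof (rule finite_subset)
  show "{p. is_cell n p} \<subseteq> {0..<3} \<times> {0..<height n 0 + 2}"
  proof
    fix p
    assume "p \<in> {p. is_cell n p}"
    then have "fst p < 3" "snd p < height n (fst p)" by (auto simp: is_cell_def)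
    then show "p \<in> {0..<3} \<times> {0..<height n 0 + 2}"
      using height_le_height_0_plus_1[of "fst p" n] by (cases p) auto
  qed
qed simp

lemma compact_Kset: "compact Kset"
proof -
  have "closed (\<Inter>n. \<Union>p\<in>{p. is_cell n p}. cell_ivl n p)"
    by (intro closed_INT closed_UN finite_cells ballI) (simp add: cell_ivl_def)
  moreover have "Kset = (\<Inter>n. \<Union>p\<in>{p. is_cell n p}. cell_ivl n p)"
    by (auto simp: Kset_def)
  ultimately have "closed Kset" by simp
  moreover have "Kset \<subseteq> {0 .. 2 * real (slots 0) + 1}"
  proof
    fix z
    assume z: "z \<in> Kset"
    have "slot 0 (cell_of 0 z) < slots 0" using slot_lt_slots[OF cell_of(1)[OF z]] .
    moreover have "cell_length 0 (cell_of 0 z) \<le> 1" using cell_length_le[OF cell_of(1)[OF z, of 0]] by simp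
    ultimately show "z \<in> {0 .. 2 * real (slots 0) + 1}" using cell_of(2)[OF z, of 0] by (auto simp: cell_ivl_def)
  qed
  ultimately show ?thesis by (meson bounded_closed_interval bounded_subset compact_eq_bounded_closed)
qed

definition cell_chain :: "(nat \<Rightarrow> nat \<times> nat) \<Rightarrow> bool" where
  "cell_chain c \<longleftrightarrow> (\<forall>n. is_cell n (c n) \<and> parent n (c (Suc n)) = c n)"

definition chain_point :: "(nat \<Rightarrow> nat \<times> nat) \<Rightarrow> real" where
  "chain_point c = (SUP n. cell_left n (c n))"

lemma cell_chain_nested:
  assumes "cell_chain c" "m \<le> n"
  shows "cell_ivl n (c n) \<subseteq> cell_ivl m (c m)"
  using assms(2)
proof (induction n)
  case 0
  then show ?case by simp
next
  case (Suc n)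
  have "cell_ivl (Suc n) (c (Suc n)) \<subseteq> cell_ivl n (c n)"
    using cell_ivl_child_subset[of n "c (Suc n)"] assms(1) unfolding cell_chain_def by metis
  then show ?case using Suc by (cases "m = Suc n") auto
qed

lemma chain_point_mem:
  assumes "cell_chain c"
  shows "chain_point c \<in> cell_ivl n (c n)"
proof -
  have upper: "cell_left m (c m) \<le> cell_left n (c n) + cell_length n (c n)" for m n
  proof (cases "n \<le> m")
    case True
    then show ?thesis
      using cell_chain_nested[OF assms True] cell_left_mem[of m "c m"] by (auto simp: cell_ivl_def)
  next
    case False
    then show ?thesis
      using cell_chain_nested[OF assms, of m n] cell_left_mem[of n "c n"] cell_length_pos[of n "c n"]
      by (auto simp: cell_ivl_def)
  qed
  have "bdd_above (range (\<lambda>m. cell_left m (c m)))" using upper by (intro bdd_aboveI2)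
  then have "cell_left n (c n) \<le> chain_point c" unfolding chain_point_def by (rule cSUP_upper2) auto
  moreover have "chain_point c \<le> cell_left n (c n) + cell_length n (c n)"
    unfolding chain_point_def using upper by (intro cSUP_least) auto
  ultimately show ?thesis by (simp add: cell_ivl_def)
qed

lemma chain_point:
  assumes "cell_chain c"
  shows "chain_point c \<in> Kset" "cell_of n (chain_point c) = c n"
proof -
  show "chain_point c \<in> Kset"
    using chain_point_mem[OF assms] assms unfolding Kset_def cell_chain_def by blast
  show "cell_of n (chain_point c) = c n"
    using cell_of_eq chain_point_mem[OF assms] assms by (simp add: cell_chain_def)
qed

fun ancestor :: "nat \<Rightarrow> nat \<Rightarrow> nat \<times> nat \<Rightarrow> nat \<times> nat" where
  "ancestor 0 n p = p"
| "ancestor (Suc k) n p = ancestor k n (parent (n + k) p)"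

lemma is_cell_ancestor: "is_cell (n + k) p \<Longrightarrow> is_cell n (ancestor k n p)"
proof (induction k arbitrary: p)
  case 0
  then show ?case by simp
next
  case (Suc k)
  then show ?case using is_cell_parent[of "n + k" p] by simp
qed

lemma ancestor_Suc: "ancestor (Suc k) n p = parent n (ancestor k (Suc n) p)"
  by (induction k arbitrary: p) simp_all

lemma ancestor_cell_of: "z \<in> Kset \<Longrightarrow> ancestor k n (cell_of (n + k) z) = cell_of n z"
  by (induction k) (simp_all add: parent_cell_of)

lemma ancestor_base: "snd (ancestor k n (a, 0)) = 0"
  by (induction k arbitrary: a) (simp_all add: parent_base)

lemma cell_of_eq_below:
  assumes "z \<in> Kset" "w \<in> Kset" "cell_of n z = cell_of n w" "m \<le> n"
  shows "cell_of m z = cell_of m w"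
  using ancestor_cell_of[OF assms(1), of "n - m" m] ancestor_cell_of[OF assms(2), of "n - m" m] assms(3,4)
  by simp

definition child :: "nat \<Rightarrow> nat \<times> nat \<Rightarrow> nat \<times> nat" where
  "child n q = (0, SOME x. 1 \<le> x \<and> x < height (Suc n) 0 \<and> parent n (0, x) = q \<and> parent n (2, x) = q)"

lemma child:
  assumes "is_cell n q"
  shows "is_cell (Suc n) (child n q)" "parent n (child n q) = q"
    "1 \<le> snd (child n q)" "parent n (2, snd (child n q)) = q"
  using someI_ex[OF common_child_exists[OF assms]] by (auto simp: child_def is_cell_def)

fun descend :: "nat \<Rightarrow> nat \<times> nat \<Rightarrow> nat \<Rightarrow> nat \<times> nat" where
  "descend n p 0 = p"
| "descend n p (Suc k) = child (n + k) (descend n p k)"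

lemma is_cell_descend: "is_cell n p \<Longrightarrow> is_cell (n + k) (descend n p k)"
  by (induction k) (auto simp: child(1))

lemma cell_nonempty:
  assumes "is_cell n p"
  shows "\<exists>z\<in>Kset. cell_of n z = p"
proof -
  define c where "c m = (if m \<le> n then ancestor (n - m) m p else descend n p (m - n))" for m
  have "is_cell m (c m) \<and> parent m (c (Suc m)) = c m" for m
  proof (cases "m < n")
    case True
    then have "parent m (c (Suc m)) = ancestor (Suc (n - Suc m)) m p"
      using ancestor_Suc[of "n - Suc m" m p] by (simp add: c_def del: ancestor.simps)
    then show ?thesis
      using True is_cell_ancestor[of m "n - m" p] assms by (simp add: c_def Suc_diff_Suc)
  next
    case False
    then have "c m = descend n p (m - n)" "c (Suc m) = child m (c m)"
      by (auto simp: c_def Suc_diff_le)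
    moreover have "is_cell m (descend n p (m - n))"
      using is_cell_descend[OF assms, of "m - n"] False by simp
    ultimately show ?thesis using child(2) by simp
  qed
  then have "cell_chain c" by (simp add: cell_chain_def)
  then show ?thesis using chain_point[of c] by (intro bexI[of _ "chain_point c"]) (auto simp: c_def)
qed

section \<open>The map\<close>

text \<open>\<open>Fmap\<close> moves a point one floor up at every level from the first level \<open>N\<close> at which it
  is not on a top floor; its cells below \<open>N\<close> are the ancestors of its new level-\<open>N\<close> cell.\<close>

definition on_top :: "real \<Rightarrow> bool" where
  "on_top z \<longleftrightarrow> (\<forall>n. is_top n (cell_of n z))"

definition first_nontop :: "real \<Rightarrow> nat" where
  "first_nontop z = (LEAST n. \<not> is_top n (cell_of n z))"

definition base_point :: real where
  "base_point = chain_point (\<lambda>n. (0, 0))"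

definition succ_chain :: "real \<Rightarrow> nat \<Rightarrow> nat \<times> nat" where
  "succ_chain z m = (let N = first_nontop z in
     if m < N then ancestor (N - m) m (next_floor (cell_of N z)) else next_floor (cell_of m z))"

definition Fmap :: "real \<Rightarrow> real" where
  "Fmap z = (if on_top z then base_point else chain_point (succ_chain z))"

lemma base_point: "base_point \<in> Kset" "cell_of n base_point = (0, 0)"
proof -
  have "cell_chain (\<lambda>n. (0, 0))"
    using height_pos parent_base by (auto simp: cell_chain_def is_cell_def)
  then show "base_point \<in> Kset" "cell_of n base_point = (0, 0)"
    using chain_point by (auto simp: base_point_def)
qed

lemma not_top_Suc:
  assumes "z \<in> Kset" "\<not> is_top n (cell_of n z)"
  shows "\<not> is_top (Suc n) (cell_of (Suc n) z)"
proof
  assume "is_top (Suc n) (cell_of (Suc n) z)"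
  then have "cell_of n z = (2, height n 2 - 1)"
    using parent_of_top cell_of(1)[OF assms(1)] parent_cell_of[OF assms(1)] by metis
  then show False using assms(2) height_pos[of n 2] by (simp add: is_top_def)
qed

lemma not_top_mono:
  assumes "z \<in> Kset" "\<not> is_top n (cell_of n z)" "n \<le> m"
  shows "\<not> is_top m (cell_of m z)"
  using assms(3)
proof (induction m)
  case 0
  then show ?case using assms(2) by simp
next
  case (Suc m)
  then show ?case using assms(2) not_top_Suc[OF assms(1)] by (cases "n = Suc m") auto
qed

lemma first_nontop:
  assumes "z \<in> Kset" "\<not> on_top z"
  shows "\<not> is_top m (cell_of m z) \<longleftrightarrow> first_nontop z \<le> m"
proof
  show "\<not> is_top m (cell_of m z) \<Longrightarrow> first_nontop z \<le> m"
    unfolding first_nontop_def by (rule Least_le)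
  have "\<exists>n. \<not> is_top n (cell_of n z)" using assms(2) by (simp add: on_top_def)
  then have "\<not> is_top (first_nontop z) (cell_of (first_nontop z) z)"
    unfolding first_nontop_def by (rule LeastI_ex)
  then show "first_nontop z \<le> m \<Longrightarrow> \<not> is_top m (cell_of m z)"
    using not_top_mono[OF assms(1)] by blast
qed

lemma cell_chain_succ_chain:
  assumes z: "z \<in> Kset" and nt: "\<not> on_top z"
  shows "cell_chain (succ_chain z)"
  unfolding cell_chain_def
proof
  fix m
  define N where "N = first_nontop z"
  define q where "q = next_floor (cell_of N z)"
  have q: "is_cell N q"
    using is_cell_next_floor cell_of(1)[OF z] first_nontop[OF z nt, of N] by (simp add: q_def N_def)
  show "is_cell m (succ_chain z m) \<and> parent m (succ_chain z (Suc m)) = succ_chain z m"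
  proof (cases "m < N")
    case True
    have "succ_chain z m = ancestor (Suc (N - Suc m)) m q"
      using True by (simp add: succ_chain_def Let_def N_def q_def Suc_diff_Suc)
    moreover have "succ_chain z (Suc m) = ancestor (N - Suc m) (Suc m) q"
      using True by (cases "Suc m = N") (simp_all add: succ_chain_def Let_def N_def q_def)
    moreover have "is_cell m (ancestor (Suc (N - Suc m)) m q)"
      using is_cell_ancestor[of m "Suc (N - Suc m)" q] q True by simp
    ultimately show ?thesis by (simp add: ancestor_Suc del: ancestor.simps)
  next
    case False
    then have top: "\<not> is_top m (cell_of m z)" using first_nontop[OF z nt] by (simp add: N_def)
    have "succ_chain z m = next_floor (cell_of m z)"
      "succ_chain z (Suc m) = next_floor (cell_of (Suc m) z)"
      using False by (simp_all add: succ_chain_def Let_def N_def)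
    moreover have "parent m (next_floor (cell_of (Suc m) z)) = next_floor (cell_of m z)"
      using parent_next_floor cell_of(1)[OF z] top parent_cell_of[OF z] by metis
    ultimately show ?thesis using top is_cell_next_floor cell_of(1)[OF z] by simp
  qed
qed

lemma Fmap_in_Kset: "z \<in> Kset \<Longrightarrow> Fmap z \<in> Kset"
  using chain_point(1)[OF cell_chain_succ_chain] base_point(1) by (simp add: Fmap_def)

lemma funpow_Fmap_in_Kset: "z \<in> Kset \<Longrightarrow> (Fmap ^^ m) z \<in> Kset"
  by (induction m) (auto simp: Fmap_in_Kset)

lemma cell_of_Fmap:
  assumes "z \<in> Kset" "\<not> is_top n (cell_of n z)"
  shows "cell_of n (Fmap z) = next_floor (cell_of n z)"
proof -
  have nt: "\<not> on_top z" using assms(2) by (auto simp: on_top_def)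
  then have "\<not> n < first_nontop z" using first_nontop[OF assms(1)] assms(2) by simp
  then have "succ_chain z n = next_floor (cell_of n z)" by (simp add: succ_chain_def Let_def)
  then show ?thesis using chain_point(2)[OF cell_chain_succ_chain[OF assms(1) nt]] nt by (simp add: Fmap_def)
qed

lemma cell_of_Fmap_top:
  assumes z: "z \<in> Kset" and top: "is_top n (cell_of n z)"
  shows "snd (cell_of n (Fmap z)) = 0"
proof (cases "on_top z")
  case True
  then show ?thesis using base_point by (simp add: Fmap_def)
next
  case nt: False
  define N where "N = first_nontop z"
  have "n < N" using first_nontop[OF z nt, of n] top by (simp add: N_def)
  then obtain k where k: "N = Suc (n + k)" by (metis less_imp_Suc_add)
  have "is_top (n + k) (cell_of (n + k) z)" "\<not> is_top N (cell_of N z)"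
    using first_nontop[OF z nt, of "n + k"] first_nontop[OF z nt, of N] k by (simp_all add: N_def)
  then have "snd (parent (n + k) (next_floor (cell_of N z))) = 0"
    using parent_next_floor_of_top[of "n + k" "cell_of N z"] cell_of(1)[OF z] parent_cell_of[OF z] k
    by simp
  then obtain a where a: "parent (n + k) (next_floor (cell_of N z)) = (a, 0)"
    by (metis prod.collapse)
  have "succ_chain z n = ancestor k n (a, 0)"
    using \<open>n < N\<close> k a by (simp add: succ_chain_def Let_def N_def)
  then show ?thesis
    using chain_point(2)[OF cell_chain_succ_chain[OF z nt]] nt ancestor_base by (simp add: Fmap_def)
qed

lemma cell_of_funpow_Fmap:
  assumes "z \<in> Kset" "cell_of n z = (a, j)" "j + m < height n a"
  shows "cell_of n ((Fmap ^^ m) z) = (a, j + m)"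
  using assms(3)
proof (induction m)
  case 0
  then show ?case using assms by simp
next
  case (Suc m)
  then have "\<not> is_top n (cell_of n ((Fmap ^^ m) z))" by (simp add: is_top_def)
  then show ?case
    using Suc cell_of_Fmap[OF funpow_Fmap_in_Kset[OF assms(1)]] by (simp add: next_floor_def)
qed

lemma cell_of_on_top: "z \<in> Kset \<Longrightarrow> on_top z \<Longrightarrow> cell_of n z = (2, height n 2 - 1)"
  using parent_of_top cell_of(1) parent_cell_of by (metis on_top_def)

lemma Fmap_on_top: "on_top z \<Longrightarrow> Fmap z = base_point"
  by (simp add: Fmap_def)

lemma Fmap_ne_base_point:
  assumes "z \<in> Kset" "\<not> on_top z"
  shows "Fmap z \<noteq> base_point"
proof
  assume "Fmap z = base_point"
  moreover obtain n where "\<not> is_top n (cell_of n z)" using assms(2) by (auto simp: on_top_def)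
  ultimately show False using cell_of_Fmap[OF assms(1)] base_point(2)[of n] by (simp add: next_floor_def)
qed

lemma inj_on_Fmap: "inj_on Fmap Kset"
proof (rule inj_onI)
  fix z w
  assume z: "z \<in> Kset" and w: "w \<in> Kset" and e: "Fmap z = Fmap w"
  consider "on_top z" "on_top w" | "\<not> on_top z" "\<not> on_top w"
    using Fmap_on_top Fmap_ne_base_point z w e by metis
  then show "z = w"
  proof cases
    case 1
    then show ?thesis using cell_of_on_top z w by (intro Kset_eqI) auto
  next
    case 2
    show ?thesis
    proof (rule Kset_eqI[OF z w])
      fix m
      define n where "n = max m (max (first_nontop z) (first_nontop w))"
      have "cell_of n (Fmap z) = next_floor (cell_of n z)" "cell_of n (Fmap w) = next_floor (cell_of n w)"
        using cell_of_Fmap first_nontop 2 z w by (simp_all add: n_def)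
      then have "cell_of n z = cell_of n w" using e by (simp add: next_floor_def prod_eq_iff)
      then show "cell_of m z = cell_of m w" using cell_of_eq_below[OF z w] by (simp add: n_def)
    qed
  qed
qed

lemma Fmap_hits_cell:
  assumes "is_cell n p"
  shows "\<exists>z\<in>Kset. cell_of n (Fmap z) = p"
proof -
  obtain x where x: "child n p = (0, x)" by (simp add: child_def)
  have c: "is_cell (Suc n) (0, x)" "parent n (0, x) = p" "1 \<le> x"
    using child[OF assms] x by auto
  then have "is_cell (Suc n) (0, x - 1)" by (auto simp: is_cell_def)
  then obtain z where z: "z \<in> Kset" "cell_of (Suc n) z = (0, x - 1)" using cell_nonempty by blast
  then have "\<not> is_top (Suc n) (cell_of (Suc n) z)" using c by (auto simp: is_top_def is_cell_def)
  then have "cell_of (Suc n) (Fmap z) = (0, x)"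
    using cell_of_Fmap[OF z(1)] z(2) c(3) by (simp add: next_floor_def)
  then have "cell_of n (Fmap z) = p" using parent_cell_of[OF Fmap_in_Kset[OF z(1)], of n] c by simp
  then show ?thesis using z by blast
qed

section \<open>Vanishing derivative\<close>

definition stable_level :: "real \<Rightarrow> nat" where
  "stable_level z = (if on_top z then 0 else first_nontop z)"

lemma Fmap_next_rank:
  assumes z: "z \<in> Kset" and y: "y \<in> Kset" and n: "stable_level z \<le> n"
    and same: "cell_of n y = cell_of n z"
  shows "cell_of n (Fmap y) = cell_of n (Fmap z)"
    "cell_rank n (cell_of n (Fmap z)) = Suc (cell_rank n (cell_of n z))"
proof (atomize (full), cases "on_top z")
  case False
  then have "\<not> is_top n (cell_of n z)" using first_nontop[OF z False, of n] n by (simp add: stable_level_def)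
  then have "cell_of n (Fmap z) = next_floor (cell_of n z)" "cell_of n (Fmap y) = next_floor (cell_of n z)"
    using cell_of_Fmap[OF z] cell_of_Fmap[OF y] same by simp_all
  then show "cell_of n (Fmap y) = cell_of n (Fmap z) \<and>
      cell_rank n (cell_of n (Fmap z)) = Suc (cell_rank n (cell_of n z))"
    using cell_rank_next_floor by simp
next
  case True
  then have top: "cell_of n z = (2, height n 2 - 1)" using cell_of_on_top[OF z] by simp
  then have "is_top (Suc n) (cell_of (Suc n) y)"
    using is_top_of_parent_top cell_of(1)[OF y] parent_cell_of[OF y] same by metis
  then obtain a where "cell_of (Suc n) (Fmap y) = (a, 0)"
    using cell_of_Fmap_top[OF y] by (metis prod.collapse)
  then have "cell_of n (Fmap y) = (0, 0)"
    using parent_cell_of[OF Fmap_in_Kset[OF y], of n] parent_base by simp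
  moreover have "cell_of n (Fmap z) = (0, 0)" using Fmap_on_top[OF True] base_point(2) by simp
  moreover have "cell_rank n (0, 0) = Suc (cell_rank n (cell_of n z))"
    using top height_pos[of n 2] by (simp add: cell_rank_def tower_offset_def)
  ultimately show "cell_of n (Fmap y) = cell_of n (Fmap z) \<and>
      cell_rank n (cell_of n (Fmap z)) = Suc (cell_rank n (cell_of n z))" by simp
qed

text \<open>If \<open>y\<close> and \<open>z\<close> first separate at level \<open>n + 1\<close>, they lie in sibling cells, at distance at
  least a gap of level \<open>n + 1\<close>, whereas \<open>Fmap y\<close> and \<open>Fmap z\<close> share a level-\<open>n\<close> cell of the next
  rank, which is shorter by the factor \<open>n + 2\<close>.\<close>

lemma Fmap_contracts_at_split_level:
  assumes z: "z \<in> Kset" and y: "y \<in> Kset" and n: "stable_level z \<le> n"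
    and same: "cell_of n y = cell_of n z" and split: "cell_of (Suc n) y \<noteq> cell_of (Suc n) z"
  shows "\<bar>Fmap y - Fmap z\<bar> \<le> \<bar>y - z\<bar> / (real n + 2)"
proof -
  define P where "P = cell_of n z"
  have P: "is_cell n P" using cell_of(1)[OF z] by (simp add: P_def)
  define g where "g = cell_length n P / (2 * real (slots (Suc n)))"
  have "parent n (cell_of (Suc n) y) = P" "parent n (cell_of (Suc n) z) = P"
    using parent_cell_of[OF y] parent_cell_of[OF z] same by (simp_all add: P_def)
  then have g: "g \<le> \<bar>y - z\<bar>"
    using sibling_cells_gap[OF cell_of(1)[OF y] cell_of(1)[OF z] split _ cell_of(2)[OF y] cell_of(2)[OF z]]
    by (simp add: g_def)
  have "\<bar>Fmap y - Fmap z\<bar> \<le> cell_length n (cell_of n (Fmap z))"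
    using cell_of_dist[OF Fmap_in_Kset[OF y] Fmap_in_Kset[OF z]] Fmap_next_rank(1)[OF z y n same] by simp
  also have "\<dots> \<le> rank_length (cell_rank n P) / (2 * (real n + 2) * real (slots (Suc n)))"
    using rank_length_step[OF cell_rank_ge_level[OF P]] Fmap_next_rank(2)[OF z y n same]
    by (simp add: cell_length_def P_def)
  also have "\<dots> = g / (real n + 2)" by (simp add: g_def cell_length_def field_simps)
  also have "\<dots> \<le> \<bar>y - z\<bar> / (real n + 2)" using g by (simp add: divide_right_mono)
  finally show ?thesis .
qed

lemma cell_of_eq_if_close:
  assumes "z \<in> Kset" "y \<in> Kset" "\<bar>y - z\<bar> < cell_gap m"
  shows "cell_of m y = cell_of m z"
  using cells_gap[OF cell_of(1)[OF assms(2)] cell_of(1)[OF assms(1)] _ cell_of(2)[OF assms(2)]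
      cell_of(2)[OF assms(1)]] assms(3)
  by fastforce

lemma Fmap_local_contraction:
  assumes z: "z \<in> Kset" and y: "y \<in> Kset" and "y \<noteq> z" "stable_level z \<le> n0"
    and close: "\<bar>y - z\<bar> < cell_gap n0"
  shows "\<bar>Fmap y - Fmap z\<bar> \<le> \<bar>y - z\<bar> / (real n0 + 2)"
proof -
  have ex: "\<exists>m. cell_of m y \<noteq> cell_of m z" using Kset_eqI[OF y z] assms(3) by blast
  define M where "M = (LEAST m. cell_of m y \<noteq> cell_of m z)"
  have M: "cell_of M y \<noteq> cell_of M z" unfolding M_def using ex by (rule LeastI_ex)
  have "cell_of n0 y = cell_of n0 z" using cell_of_eq_if_close[OF z y close] .
  then have "n0 < M" using cell_of_eq_below[OF y z] M by (meson not_less)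
  then obtain n where n: "M = Suc n" "n0 \<le> n" by (metis Suc_le_eq less_imp_Suc_add le_add1 Suc_le_mono)
  then have "cell_of n y = cell_of n z" using not_less_Least[of n "\<lambda>m. cell_of m y \<noteq> cell_of m z"]
    by (simp add: M_def)
  then have "\<bar>Fmap y - Fmap z\<bar> \<le> \<bar>y - z\<bar> / (real n + 2)"
    using Fmap_contracts_at_split_level[OF z y _ _ M[unfolded n(1)]] assms(4) n(2) by simp
  also have "\<dots> \<le> \<bar>y - z\<bar> / (real n0 + 2)" using n(2) by (simp add: divide_left_mono)
  finally show ?thesis .
qed

lemma Fmap_rel_deriv_0:
  assumes z: "z \<in> Kset"
  shows "has_rel_deriv Fmap Kset z 0"
  unfolding has_rel_deriv_def Lim_within
proof (intro allI impI)
  fix e :: real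
  assume e: "0 < e"
  define n0 where "n0 = stable_level z + nat \<lceil>1 / e\<rceil>"
  have "1 / e < real n0 + 2" unfolding n0_def by linarith
  then have n0: "1 / (real n0 + 2) < e" using e by (simp add: divide_less_eq field_simps)
  show "\<exists>d>0. \<forall>y\<in>Kset. 0 < dist y z \<and> dist y z < d \<longrightarrow> dist ((Fmap y - Fmap z) / (y - z)) 0 < e"
  proof (intro exI[of _ "cell_gap n0"] conjI ballI impI)
    show "0 < cell_gap n0" by (rule cell_gap_pos)
    fix y
    assume y: "y \<in> Kset" and "0 < dist y z \<and> dist y z < cell_gap n0"
    then have ne: "y \<noteq> z" and close: "\<bar>y - z\<bar> < cell_gap n0" by (auto simp: dist_real_def)
    have "\<bar>Fmap y - Fmap z\<bar> \<le> \<bar>y - z\<bar> / (real n0 + 2)"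
      using Fmap_local_contraction[OF z y ne _ close] by (simp add: n0_def)
    then have "\<bar>Fmap y - Fmap z\<bar> / \<bar>y - z\<bar> \<le> 1 / (real n0 + 2)"
      using ne by (simp add: divide_le_eq field_simps)
    then show "dist ((Fmap y - Fmap z) / (y - z)) 0 < e"
      using n0 by (simp add: dist_real_def abs_divide)
  qed
qed

section \<open>Homeomorphism\<close>

lemma continuous_on_Fmap: "continuous_on Kset Fmap"
  unfolding continuous_on_iff
proof (intro ballI allI impI)
  fix z e :: real
  assume z: "z \<in> Kset" and e: "0 < e"
  show "\<exists>d>0. \<forall>y\<in>Kset. dist y z < d \<longrightarrow> dist (Fmap y) (Fmap z) < e"
  proof (intro exI[of _ "min e (cell_gap (stable_level z))"] conjI ballI impI)
    show "0 < min e (cell_gap (stable_level z))" using e cell_gap_pos by simp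
    fix y
    assume y: "y \<in> Kset" and d: "dist y z < min e (cell_gap (stable_level z))"
    show "dist (Fmap y) (Fmap z) < e"
    proof (cases "y = z")
      case True
      then show ?thesis using e by simp
    next
      case False
      have "\<bar>Fmap y - Fmap z\<bar> \<le> \<bar>y - z\<bar> / (real (stable_level z) + 2)"
        using Fmap_local_contraction[OF z y False order_refl] d by (simp add: dist_real_def)
      also have "\<dots> \<le> \<bar>y - z\<bar>"
        using mult_left_mono[of 1 "real (stable_level z) + 2" "\<bar>y - z\<bar>"] by (simp add: divide_le_eq)
      finally show ?thesis using d by (simp add: dist_real_def)
    qed
  qed
qed

lemma Fmap_image: "Fmap ` Kset = Kset"
proof
  show "Fmap ` Kset \<subseteq> Kset" using Fmap_in_Kset by blast
  have closed: "closed (Fmap ` Kset)"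
    using compact_continuous_image[OF continuous_on_Fmap compact_Kset] compact_imp_closed by blast
  show "Kset \<subseteq> Fmap ` Kset"
  proof
    fix y
    assume y: "y \<in> Kset"
    have "y \<in> closure (Fmap ` Kset)"
      unfolding closure_approachable
    proof (intro allI impI)
      fix e :: real
      assume "0 < e"
      then obtain n where n: "(1/2::real) ^ n < e" using real_arch_pow_inv[of e "1/2"] by auto
      obtain z where z: "z \<in> Kset" "cell_of n (Fmap z) = cell_of n y"
        using Fmap_hits_cell[OF cell_of(1)[OF y]] by blast
      then have "\<bar>Fmap z - y\<bar> \<le> (1/2) ^ n"
        using cell_of_dist_le_half_pow[OF Fmap_in_Kset[OF z(1)] y] by simp
      then show "\<exists>x\<in>Fmap ` Kset. dist x y < e"
        using z(1) n by (intro bexI[of _ "Fmap z"]) (auto simp: dist_real_def)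
    qed
    then show "y \<in> Fmap ` Kset" using closed closure_closed by metis
  qed
qed

lemma homeo_of_Fmap: "homeo_of Kset Fmap"
  unfolding homeo_of_def
  using homeomorphism_compact[OF compact_Kset continuous_on_Fmap Fmap_image inj_on_Fmap] by blast

section \<open>Minimality\<close>

lemma cell_of_low_floor:
  assumes z: "z \<in> Kset" and "cell_of n z = (a, j)" "j < height m 0" "m < n"
  shows "cell_of m z = (0, j)"
  using assms(2-4)
proof (induction n arbitrary: a)
  case 0
  then show ?case by simp
next
  case (Suc n)
  have "j < height n 0" using Suc.prems(2,3) height_0_mono[of m n] by simp
  then have "cell_of n z = (0, j)" using parent_cell_of[OF z, of n] parent_low Suc.prems(1) by simp
  then show ?case using Suc.IH Suc.prems(2,3) by (cases "m = n") auto
qed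

text \<open>Run the orbit to the top of its level-\<open>(n+2)\<close> tower; the next point is on a base floor, and
  the first block of every level-\<open>(n+2)\<close> tower is a level-\<open>(n+1)\<close> tower \<open>0\<close>, which passes
  through every level-\<open>n\<close> cell.\<close>

lemma orbit_hits_cell:
  assumes z: "z \<in> Kset" and V: "is_cell n V"
  shows "\<exists>m. cell_of n ((Fmap ^^ m) z) = V"
proof -
  define L where "L = Suc (Suc n)"
  obtain a j where aj: "cell_of L z = (a, j)" by (cases "cell_of L z")
  have j: "j < height L a" using cell_of(1)[OF z, of L] aj by (simp add: is_cell_def)
  define m0 where "m0 = height L a - 1 - j"
  have "cell_of L ((Fmap ^^ m0) z) = (a, j + m0)"
    using cell_of_funpow_Fmap[OF z aj] j by (simp add: m0_def)
  then have "is_top L (cell_of L ((Fmap ^^ m0) z))" using j by (simp add: is_top_def m0_def)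
  then have "snd (cell_of L ((Fmap ^^ Suc m0) z)) = 0"
    using cell_of_Fmap_top[OF funpow_Fmap_in_Kset[OF z]] by simp
  moreover define w where "w = (Fmap ^^ Suc m0) z"
  ultimately obtain c where c: "cell_of L w = (c, 0)" by (metis prod.collapse)
  have w: "w \<in> Kset" unfolding w_def by (rule funpow_Fmap_in_Kset[OF z])
  obtain p where p: "p < height (Suc n) 0" "parent n (0, p) = V" using common_child_exists[OF V] by blast
  have "c < 3" using cell_of(1)[OF w, of L] c by (simp add: is_cell_def)
  then have "p < height L c" using p(1) height_0_mono[of "Suc n" L] height_0_le[of c L] by (simp add: L_def)
  then have "cell_of L ((Fmap ^^ p) w) = (c, p)" using cell_of_funpow_Fmap[OF w c] by simp
  then have "cell_of (Suc n) ((Fmap ^^ p) w) = (0, p)"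
    using cell_of_low_floor[OF funpow_Fmap_in_Kset[OF w]] p(1) by (simp add: L_def)
  then have "cell_of n ((Fmap ^^ p) w) = V"
    using parent_cell_of[OF funpow_Fmap_in_Kset[OF w, of p], of n] p(2) by simp
  moreover have "(Fmap ^^ p) w = (Fmap ^^ (p + Suc m0)) z" by (simp only: w_def funpow_add comp_def)
  ultimately show ?thesis by metis
qed

lemma minimal_Fmap: "minimal_sys Kset Fmap"
  unfolding minimal_sys_def
proof
  assume "\<exists>A. A \<noteq> {} \<and> A \<subset> Kset \<and> closedin (top_of_set Kset) A \<and> Fmap ` A = A"
  then obtain A where A: "A \<noteq> {}" "A \<subset> Kset" "closedin (top_of_set Kset) A" "Fmap ` A = A" by blast
  obtain x y where x: "x \<in> A" and y: "y \<in> Kset" "y \<notin> A" using A(1,2) by blast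
  have "openin (top_of_set Kset) (Kset - A)" using A(3) by (simp add: closedin_def)
  then obtain e where e: "0 < e" "\<forall>x'\<in>Kset. dist x' y < e \<longrightarrow> x' \<in> Kset - A"
    using y unfolding openin_euclidean_subtopology_iff by blast
  obtain n where n: "(1/2::real) ^ n < e" using real_arch_pow_inv[OF e(1), of "1/2"] by auto
  have orbit: "(Fmap ^^ k) x \<in> A" for k by (induction k) (use x A(4) in auto)
  then have xK: "(Fmap ^^ k) x \<in> Kset" for k using A(2) by blast
  obtain m where "cell_of n ((Fmap ^^ m) x) = cell_of n y"
    using orbit_hits_cell[OF xK[of 0] cell_of(1)[OF y(1)]] by auto
  then have "\<bar>(Fmap ^^ m) x - y\<bar> \<le> (1/2) ^ n" using cell_of_dist_le_half_pow[OF xK y(1)] by simp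
  then have "dist ((Fmap ^^ m) x) y < e" using n by (simp add: dist_real_def)
  then show False using e(2) xK orbit by blast
qed

section \<open>Weak mixing\<close>

lemma block_pos_0_low: "k \<le> N + 2 \<Longrightarrow> block_pos N 0 k = k * height N 0"
proof -
  assume k: "k \<le> N + 2"
  have "take k (word N 0) = take k (replicate (N+2) (0::nat)) @ take (k - (N+2)) (replicate (N+1) 1 @ [2])"
    by (simp only: word_def take_append length_replicate if_False zero_neq_one)
  also have "\<dots> = replicate k 0" using k by (simp del: replicate.simps add: min_def)
  finally show ?thesis by (simp add: block_start_def sum_list_replicate del: replicate.simps)
qed

lemma block_pos_0_high:
  "d \<le> N + 1 \<Longrightarrow> block_pos N 0 (N + 2 + d) = (N + 2) * height N 0 + d * (height N 0 + 1)"
proof -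
  assume d: "d \<le> N + 1"
  have "take d (replicate (N+1) (1::nat) @ [2]) = take d (replicate (N+1) 1) @ take (d - (N+1)) [2]"
    by (simp only: take_append length_replicate)
  also have "\<dots> = replicate d 1" using d by (simp del: replicate.simps add: min_def)
  finally have "take (N + 2 + d) (word N 0) = replicate (N+2) 0 @ replicate d 1"
    by (simp del: replicate.simps add: word_def)
  then show ?thesis using height_1[of N] by (simp del: replicate.simps add: block_start_def sum_list_replicate)
qed

text \<open>In tower \<open>0\<close> of level \<open>N + 1\<close>, whose word is \<open>0\<^sup>N\<^sup>+\<^sup>2 1\<^sup>N\<^sup>+\<^sup>1 2\<close>, block \<open>r + 1\<close> lies
  exactly \<open>(N + 1) H + r\<close> floors below block \<open>r + N + 2\<close>, where \<open>H = height N 0\<close>: the \<open>r\<close> extra floors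
  come from the \<open>r\<close> towers \<open>1\<close> in between. This freedom in \<open>r\<close> lets a single time \<open>m\<close>
  serve two pairs of cells.\<close>

lemma return_time_in_tower_0:
  assumes U: "parent n (0, p) = U" "p < height (Suc n) 0"
    and V: "parent n (0, q) = V" "q < height (Suc n) 0"
    and N: "Suc n < N" "r \<le> N + 1" and m: "p + m = (N + 1) * height N 0 + r + q"
  shows "\<exists>z\<in>Kset. cell_of n z = U \<and> cell_of n ((Fmap ^^ m) z) = V"
proof -
  define H where "H = height N 0"
  define k where "k = Suc r"
  have k: "k < 2 * N + 4" "k + N + 1 < 2 * N + 4" using N(2) by (simp_all add: k_def)
  have "height (Suc n) 0 \<le> H" using height_0_mono[of "Suc n" N] N(1) by (simp add: H_def)
  moreover have "H \<le> height N (word N 0 ! k)" "H \<le> height N (word N 0 ! (k + N + 1))"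
    unfolding H_def using k by (simp_all add: height_0_le word_nth_lt_3 word_length)
  ultimately have pq: "p < height N (word N 0 ! k)" "q < height N (word N 0 ! (k + N + 1))"
    using U(2) V(2) by linarith+
  define x where "x = block_pos N 0 k + p"
  have "is_cell (Suc N) (0, x)" using block_pos_add_le[OF k(1), of 0] pq(1) by (simp add: is_cell_def x_def)
  then obtain z where z: "z \<in> Kset" "cell_of (Suc N) z = (0, x)" using cell_nonempty by blast
  have zm: "(Fmap ^^ m) z \<in> Kset" using funpow_Fmap_in_Kset[OF z(1)] .
  have "block_pos N 0 k = k * H" using block_pos_0_low[of k N] N(2) by (simp add: H_def k_def)
  moreover have "block_pos N 0 (k + N + 1) = (N + 2) * H + r * (H + 1)"
    using block_pos_0_high[OF N(2)] by (simp add: H_def k_def algebra_simps)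
  ultimately have xm: "x + m = block_pos N 0 (k + N + 1) + q"
    using m by (simp add: x_def k_def H_def algebra_simps)
  then have "x + m < height (Suc N) 0" using block_pos_add_le[OF k(2), of 0] pq(2) by simp
  then have "cell_of (Suc N) ((Fmap ^^ m) z) = (0, block_pos N 0 (k + N + 1) + q)"
    using cell_of_funpow_Fmap[OF z] xm by simp
  then have "cell_of N ((Fmap ^^ m) z) = (word N 0 ! (k + N + 1), q)"
    using parent_cell_of[OF zm, of N] parent_block_pos[OF k(2) pq(2)] by simp
  then have "cell_of (Suc n) ((Fmap ^^ m) z) = (0, q)"
    using cell_of_low_floor[OF zm] V(2) N(1) by simp
  then have "cell_of n ((Fmap ^^ m) z) = V"
    using parent_cell_of[OF zm, of n] V(1) by simp
  moreover have "cell_of N z = (word N 0 ! k, p)"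
    using parent_cell_of[OF z(1), of N] z(2) parent_block_pos[OF k(1) pq(1)] by (simp add: x_def)
  then have "cell_of (Suc n) z = (0, p)" using cell_of_low_floor[OF z(1)] U(2) N(1) by simp
  then have "cell_of n z = U" using parent_cell_of[OF z(1), of n] U(1) by simp
  ultimately show ?thesis using z(1) by blast
qed

lemma common_return_time:
  assumes "is_cell n U1" "is_cell n V1" "is_cell n U2" "is_cell n V2"
  shows "\<exists>m\<ge>1. \<exists>z1\<in>Kset. \<exists>z2\<in>Kset. cell_of n z1 = U1 \<and> cell_of n ((Fmap ^^ m) z1) = V1
            \<and> cell_of n z2 = U2 \<and> cell_of n ((Fmap ^^ m) z2) = V2"
proof -
  obtain p1 q1 p2 q2 where pq:
    "p1 < height (Suc n) 0" "parent n (0, p1) = U1" "q1 < height (Suc n) 0" "parent n (0, q1) = V1"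
    "p2 < height (Suc n) 0" "parent n (0, p2) = U2" "q2 < height (Suc n) 0" "parent n (0, q2) = V2"
    using common_child_exists assms by metis
  define N where "N = Suc n + 2 * height (Suc n) 0"
  define m where "m = (N + 1) * height N 0 + q1 + q2"
  have N: "Suc n < N" "q2 + p1 \<le> N + 1" "q1 + p2 \<le> N + 1"
    using pq by (simp_all add: N_def)
  have "p1 + m = (N + 1) * height N 0 + (q2 + p1) + q1" "p2 + m = (N + 1) * height N 0 + (q1 + p2) + q2"
    by (simp_all add: m_def)
  then obtain z1 z2 where "z1 \<in> Kset" "cell_of n z1 = U1" "cell_of n ((Fmap ^^ m) z1) = V1"
    "z2 \<in> Kset" "cell_of n z2 = U2" "cell_of n ((Fmap ^^ m) z2) = V2"
    using return_time_in_tower_0[OF pq(2,1) pq(4,3) N(1,2)] return_time_in_tower_0[OF pq(6,5) pq(8,7) N(1,3)]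
    by blast
  moreover have "1 \<le> m" using height_pos[of N 0] by (simp add: m_def)
  ultimately show ?thesis by blast
qed

lemma funpow_pair_map:
  fixes f :: "'a \<Rightarrow> 'a" and g :: "'b \<Rightarrow> 'b"
  shows "((\<lambda>(x, y). (f x, g y)) ^^ m) (a, b) = ((f ^^ m) a, (g ^^ m) b)"
  by (induction m) auto

lemma cells_in_open:
  assumes W: "openin (top_of_set (Kset \<times> Kset)) W" and u: "(u1, u2) \<in> W"
  shows "\<exists>n. \<forall>a\<in>Kset. \<forall>b\<in>Kset. cell_of n a = cell_of n u1 \<and> cell_of n b = cell_of n u2 \<longrightarrow> (a, b) \<in> W"
proof -
  obtain e where e: "0 < e" "\<forall>x'\<in>Kset \<times> Kset. dist x' (u1, u2) < e \<longrightarrow> x' \<in> W"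
    using W u unfolding openin_euclidean_subtopology_iff by blast
  have uK: "u1 \<in> Kset" "u2 \<in> Kset" using openin_subset[OF W] u by auto
  obtain n where n: "(1/2::real) ^ n < e / 2" using real_arch_pow_inv[of "e/2" "1/2"] e(1) by auto
  show ?thesis
  proof (intro exI[of _ n] ballI impI)
    fix a b
    assume ab: "a \<in> Kset" "b \<in> Kset" "cell_of n a = cell_of n u1 \<and> cell_of n b = cell_of n u2"
    then have "\<bar>a - u1\<bar> \<le> (1/2) ^ n" "\<bar>b - u2\<bar> \<le> (1/2) ^ n"
      using cell_of_dist_le_half_pow[OF ab(1) uK(1)] cell_of_dist_le_half_pow[OF ab(2) uK(2)] by auto
    then have "dist a u1 < e / 2" "dist b u2 < e / 2" using n by (simp_all add: dist_real_def)
    moreover have "dist (a, b) (u1, u2) \<le> dist a u1 + dist b u2"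
      unfolding dist_Pair_Pair by (rule sqrt_sum_squares_le_sum) auto
    ultimately show "(a, b) \<in> W" using e(2) ab(1,2) by simp
  qed
qed

lemma weakly_mixing_Fmap: "weakly_mixing Kset Fmap"
  unfolding weakly_mixing_def transitive_sys_def
proof (intro allI impI)
  fix U V
  assume UV: "openin (top_of_set (Kset \<times> Kset)) U \<and> U \<noteq> {} \<and> openin (top_of_set (Kset \<times> Kset)) V \<and> V \<noteq> {}"
  obtain u1 u2 v1 v2 where u: "(u1, u2) \<in> U" and v: "(v1, v2) \<in> V" using UV by auto
  have K: "u1 \<in> Kset" "u2 \<in> Kset" "v1 \<in> Kset" "v2 \<in> Kset"
    using UV u v openin_subset[of "top_of_set (Kset \<times> Kset)"] by auto
  obtain nU where nU: "\<forall>x\<in>Kset. \<forall>y\<in>Kset. cell_of nU x = cell_of nU u1 \<and> cell_of nU y = cell_of nU u2 \<longrightarrow> (x, y) \<in> U"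
    using cells_in_open[of U u1 u2] UV u by blast
  obtain nV where nV: "\<forall>x\<in>Kset. \<forall>y\<in>Kset. cell_of nV x = cell_of nV v1 \<and> cell_of nV y = cell_of nV v2 \<longrightarrow> (x, y) \<in> V"
    using cells_in_open[of V v1 v2] UV v by blast
  define n where "n = max nU nV"
  obtain m z1 z2 where m: "1 \<le> m" "z1 \<in> Kset" "z2 \<in> Kset"
    "cell_of n z1 = cell_of n u1" "cell_of n ((Fmap ^^ m) z1) = cell_of n v1"
    "cell_of n z2 = cell_of n u2" "cell_of n ((Fmap ^^ m) z2) = cell_of n v2"
    using common_return_time[OF cell_of(1)[OF K(1)] cell_of(1)[OF K(3)] cell_of(1)[OF K(2)] cell_of(1)[OF K(4)]]
    by blast
  have n: "nU \<le> n" "nV \<le> n" by (simp_all add: n_def)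
  have zm: "(Fmap ^^ m) z1 \<in> Kset" "(Fmap ^^ m) z2 \<in> Kset" using funpow_Fmap_in_Kset m(2,3) by auto
  have "(z1, z2) \<in> U"
    using nU m(2,3) cell_of_eq_below[OF m(2) K(1) m(4) n(1)] cell_of_eq_below[OF m(3) K(2) m(6) n(1)]
    by blast
  then have "((Fmap ^^ m) z1, (Fmap ^^ m) z2) \<in> ((\<lambda>(x, y). (Fmap x, Fmap y)) ^^ m) ` U"
    by (metis funpow_pair_map image_eqI)
  moreover have "((Fmap ^^ m) z1, (Fmap ^^ m) z2) \<in> V"
    using nV zm cell_of_eq_below[OF zm(1) K(3) m(5) n(2)] cell_of_eq_below[OF zm(2) K(4) m(7) n(2)]
    by blast
  ultimately show "\<exists>n\<ge>1. ((\<lambda>(x, y). (Fmap x, Fmap y)) ^^ n) ` U \<inter> V \<noteq> {}" using m(1) by blast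
qed

section \<open>Topology of the Cantor set\<close>

lemma totally_disconnected_Kset: "totally_disconnected Kset"
  unfolding totally_disconnected_def
proof (intro allI impI ballI)
  fix C a b
  assume C: "C \<subseteq> Kset \<and> connected C" and ab: "a \<in> C" "b \<in> C"
  have False if xy: "x < y" "x \<in> C" "y \<in> C" for x y
  proof -
    have x: "x \<in> Kset" and y: "y \<in> Kset" using xy C by auto
    obtain m where m: "cell_of m x \<noteq> cell_of m y" using Kset_eqI[OF x y] xy(1) by fastforce
    define P where "P = cell_of m x"
    define r where "r = cell_left m P + cell_length m P"
    have P: "is_cell m P" using cell_of(1)[OF x] by (simp add: P_def)
    have "x \<le> r" using cell_of(2)[OF x, of m] by (simp add: r_def P_def cell_ivl_def)
    have "r < y"
    proof (rule ccontr)
      assume "\<not> r < y"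
      then have "y \<in> cell_ivl m P" using cell_of(2)[OF x, of m] xy(1) by (auto simp: cell_ivl_def r_def P_def)
      then show False using cell_of_eq[OF P] m by (simp add: P_def)
    qed
    \<comment> \<open>Just beyond the right end of \<open>x\<close>'s level-\<open>m\<close> interval, closer than any other
      level-\<open>m\<close> interval, lies a point of \<open>C\<close> outside \<open>Kset\<close>.\<close>
    define d where "d = min (cell_gap m) (y - r)"
    have "0 < d" "d \<le> y - r" "d \<le> cell_gap m" using \<open>r < y\<close> cell_gap_pos[of m] by (auto simp: d_def)
    define c where "c = r + d / 2"
    have c: "r < c" "c < y" "\<bar>r - c\<bar> < cell_gap m"
      using \<open>0 < d\<close> \<open>d \<le> y - r\<close> \<open>d \<le> cell_gap m\<close> by (auto simp: c_def)
    have "c \<in> C" using C xy c \<open>x \<le> r\<close> unfolding connected_iff_interval by (meson less_imp_le order_trans)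
    moreover have "c \<notin> Kset"
    proof
      assume cK: "c \<in> Kset"
      show False
      proof (cases "cell_of m c = P")
        case True
        then show False using cell_of(2)[OF cK, of m] c(1) by (simp add: cell_ivl_def r_def)
      next
        case False
        have "r \<in> cell_ivl m P" using cell_length_pos[of m P] by (simp add: cell_ivl_def r_def)
        then have "cell_gap m \<le> \<bar>r - c\<bar>"
          using cells_gap[OF P cell_of(1)[OF cK] False[symmetric]] cell_of(2)[OF cK] by blast
        then show False using c(3) by simp
      qed
    qed
    ultimately show False using C by blast
  qed
  then show "a = b" using ab by (metis linorder_neqE)
qed

lemma Kset_perfect: "x \<in> Kset \<Longrightarrow> x islimpt Kset"
  unfolding islimpt_approachable
proof (intro allI impI)
  fix e :: real
  assume x: "x \<in> Kset" and e: "0 < e"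
  obtain n where n: "(1/2::real) ^ n < e" using real_arch_pow_inv[OF e, of "1/2"] by auto
  define P where "P = cell_of n x"
  have P: "is_cell n P" using cell_of(1)[OF x] by (simp add: P_def)
  obtain s where s: "child n P = (0, s)" by (simp add: child_def)
  have "is_cell (Suc n) (0, s)" "parent n (0, s) = P" "parent n (2, s) = P"
    using child[OF P] s by auto
  moreover have "is_cell (Suc n) (2, s)" using calculation(1) height_2[of "Suc n"] by (simp add: is_cell_def)
  ultimately obtain y1 y2 where y: "y1 \<in> Kset" "cell_of (Suc n) y1 = (0, s)" "cell_of n y1 = P"
    "y2 \<in> Kset" "cell_of (Suc n) y2 = (2, s)" "cell_of n y2 = P"
    using cell_nonempty parent_cell_of by metis
  have close: "dist y x < e" if "y \<in> Kset" "cell_of n y = P" for y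
    using cell_of_dist_le_half_pow[OF that(1) x, of n] that(2) n by (simp add: P_def dist_real_def)
  have "y1 \<noteq> y2" using y by auto
  then show "\<exists>x'\<in>Kset. x' \<noteq> x \<and> dist x' x < e"
    using y close by metis
qed

lemma cantor_set_Kset: "cantor_set Kset"
  unfolding cantor_set_def
  using base_point(1) compact_Kset totally_disconnected_Kset Kset_perfect by blast

lemma conjugate_refl: "conjugate X T X T"
  unfolding conjugate_def using homeomorphism_ident[of X] by force

theorem theoremB:
  shows "\<exists>(X::real set) (T::real \<Rightarrow> real) (K::real set) (f::real \<Rightarrow> real).
           cantor_set X \<and> homeo_of X T \<and> minimal_sys X T \<and> weakly_mixing X T \<and>
           cantor_set K \<and> homeo_of K f \<and> conjugate X T K f \<and>
           (\<forall>x\<in>K. has_rel_deriv f K x 0)"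
  using cantor_set_Kset homeo_of_Fmap minimal_Fmap weakly_mixing_Fmap conjugate_refl Fmap_rel_deriv_0
  by blast
end
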